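(* Let $\sigma$ be a signature and $k$ a natural number; let $\chi_0:=\bot$ and $\chi_k:=\chi\vee\dots\vee\chi$ ($k$ disjuncts) for $k\ge1$. (i) For any generalized causal team $T$ over $\sigma$: $T\models^g\chi_k$ iff $|T/_{\approx}|\leq k$. (ii) For any causal team $T$ over $\sigma$: $T\models^c\chi_k$ iff $|T^-|\leq k$.
   Context: A signature $\sigma=(\mathrm{Dom},\mathrm{Ran})$: $\mathrm{Dom}$ nonempty finite set of variables, each with nonempty finite range $\mathrm{Ran}(X)$; $\mathbf X=\mathbf x$ abbreviates $X_1=x_1\wedge\dots\wedge X_n=x_n$ ($\mathbf x\in\prod\mathrm{Ran}(X_i)$), inconsistent if it contains $X=x,X=x'$ with $x\ne x'$. ${=}(V)$ is the constancy atom; $\bot$ abbreviates $X=x\wedge\neg(X=x)$. With $\mathbf W_V$ listing $\mathrm{Dom}\setminus\{V\}$, $\chi:=\bigwedge_{V\in\mathrm{Dom}}\bigwedge_{\mathbf w\in\mathrm{Ran}(\mathbf W_V)}\big(\mathbf W_V=\mathbf w\;\Box\!\!\rightarrow{=}(V)\big)\wedge\bigwedge_{V\in\mathrm{Dom}}{=}(V)$. Systems of functions $\mathcal F$: for each $V\in\mathrm{En}(\mathcal F)\subseteq\mathrm{Dom}$ parents $PA^{\mathcal F}_V\subseteq\mathrm{Dom}\setminus\{V\}$ and $\mathcal F_V:\mathrm{Ran}(PA^{\mathcal F}_V)\to\mathrm{Ran}(V)$; $\mathrm{Ex}(\mathcal F)=\mathrm{Dom}\setminus\mathrm{En}(\mathcal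 F)$; only recursive (acyclic parent graph). An assignment $s$ is compatible with $\mathcal F$ if $s(V)=\mathcal F_V(s(PA^{\mathcal F}_V))$ for $V\in\mathrm{En}(\mathcal F)$. For consistent $\mathbf X=\mathbf x$: $\mathcal F_{\mathbf X=\mathbf x}$ restricts $\mathcal F$ to $\mathrm{En}(\mathcal F)\setminus\mathbf X$; $s^{\mathcal F}_{\mathbf X=\mathbf x}$: $X_i\mapsto x_i$, $V\mapsto s(V)$ on $\mathrm{Ex}(\mathcal F)\setminus\mathbf X$, $V\mapsto\mathcal F_V(s^{\mathcal F}_{\mathbf X=\mathbf x}(PA^{\mathcal F}_V))$ on $\mathrm{En}(\mathcal F)\setminus\mathbf X$. Causal team $T=(T^-,\mathcal F)$ ($T^-$ a set of compatible assignments; empty team components identified as $\emptyset$); causal subteams $(S^-,\mathcal F)$, $S^-\subseteq T^-$; $T_{\mathbf X=\mathbf x}=(\{s^{\mathcal F}_{\mathbf X=\mathbf x}:s\in T^-\},\mathcal F_{\mathbf X=\mathbf x})$; $\models^c$: $T\models X=x$ iff $s(X)=x$ for all $s\in T^-$; $T\models{=}(V)$ iff $s(V)=s'(V)$ for all $s,s'\in T^-$; $T\models\neg\alpha$ iff $(\{s\},\mathcal F)\not\models\alpha$ for all $s\in T^-$; $\wedge$ classical; $T\models\varphi\vee\psi$ iff causal subteams $T_1,T_2$ exist with $T_1^-\cup T_2^-=T^-$, $T_1\models\varphi$, $T_2\models\psi$; $T\models\mathbf X=\mathbf x\;\Box\!\!\rightarrow\varphi$ iff $\mathbf X=\mathbf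 x$ inconsistent or $T_{\mathbf X=\mathbf x}\models\varphi$. Generalized causal team: a set $T$ of compatible pairs $(s,\mathcal F)$; $T^-=\{s:(s,\mathcal F)\in T\}$; $T_{\mathbf X=\mathbf x}=\{(s^{\mathcal F}_{\mathbf X=\mathbf x},\mathcal F_{\mathbf X=\mathbf x}):(s,\mathcal F)\in T\}$; $\models^g$: same clauses except $T\models\neg\alpha$ iff $\{(s,\mathcal F)\}\not\models\alpha$ for all $(s,\mathcal F)\in T$, and $T\models\varphi\vee\psi$ iff $T=T_1\cup T_2$ with $T_1\models\varphi$, $T_2\models\psi$. $\mathrm{Cn}(\mathcal F)=\{V\in\mathrm{En}(\mathcal F):\mathcal F_V\text{ constant}\}$; $\mathcal F_V\sim\mathcal G_V$ iff $\mathcal F_V(\mathbf x\mathbf y)=\mathcal G_V(\mathbf x\mathbf z)$ for all $\mathbf x\in\mathrm{Ran}(PA^{\mathcal F}_V\cap PA^{\mathcal G}_V)$, $\mathbf y\in\mathrm{Ran}(PA^{\mathcal F}_V\setminus PA^{\mathcal G}_V)$, $\mathbf z\in\mathrm{Ran}(PA^{\mathcal G}_V\setminus PA^{\mathcal F}_V)$; $\mathcal F\sim\mathcal G$ iff $\mathrm{En}(\mathcal F)\setminus\mathrm{Cn}(\mathcal F)=\mathrm{En}(\mathcal G)\setminus\mathrm{Cn}(\mathcal G)$ and $\mathcal F_V\sim\mathcal G_V$ for each such $V$. On pairs, $(s,\mathcal F)\approx(t,\mathcal G)$ iff $s=t$ and $\mathcal F\sim\mathcal G$; $T/_{\approx}$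 is the set of $\approx$-classes of elements of $T$. *)

theory Defs
  imports Main "HOL-Library.FuncSet"
begin

definition signature :: "'v set \<Rightarrow> ('v \<Rightarrow> 'a set) \<Rightarrow> bool" where
  "signature Dom Ran \<longleftrightarrow> finite Dom \<and> Dom \<noteq> {} \<and>
     (\<forall>X\<in>Dom. finite (Ran X) \<and> Ran X \<noteq> {})"

text \<open>Assignments over the signature are the elements of PiE Dom Ran
  (undefined outside Dom).  For a set of variables A, Ran(A) is PiE A Ran.\<close>

record ('v, 'a) sys =
  En :: "'v set"
  PA :: "'v \<Rightarrow> 'v set"
  Fn :: "'v \<Rightarrow> ('v \<Rightarrow> 'a) \<Rightarrow> 'a"

definition parent_rel :: "('v, 'a) sys \<Rightarrow> ('v \<times> 'v) set" where
  "parent_rel F = {(P, V). V \<in> En F \<and> P \<in> PA F V}"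

text \<open>Well-formed recursive system of functions over the signature, represented
  canonically (functions are extensional on their domain; exogenous variables
  carry no data).\<close>

definition wf_sys :: "'v set \<Rightarrow> ('v \<Rightarrow> 'a set) \<Rightarrow> ('v, 'a) sys \<Rightarrow> bool" where
  "wf_sys Dom Ran F \<longleftrightarrow>
     En F \<subseteq> Dom \<and>
     (\<forall>V\<in>En F. PA F V \<subseteq> Dom - {V} \<and> Fn F V \<in> PiE (PiE (PA F V) Ran) (\<lambda>_. Ran V)) \<and>
     (\<forall>V. V \<notin> En F \<longrightarrow> PA F V = {} \<and> Fn F V = undefined) \<and>
     acyclic (parent_rel F)"

definition compatible :: "('v, 'a) sys \<Rightarrow> ('v \<Rightarrow> 'a) \<Rightarrow> bool" where
  "compatible F s \<longleftrightarrow> (\<forall>V\<in>En F. s V = Fn F V (restrict s (PA F V)))"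

text \<open>Antecedents X = x are lists of variable/value pairs.\<close>

definition consistent :: "('v \<times> 'a) list \<Rightarrow> bool" where
  "consistent xs \<longleftrightarrow> (\<forall>(X, x)\<in>set xs. \<forall>(Y, y)\<in>set xs. X = Y \<longrightarrow> x = y)"

definition sys_int :: "('v, 'a) sys \<Rightarrow> ('v \<times> 'a) list \<Rightarrow> ('v, 'a) sys" where
  "sys_int F xs =
     (let E = En F - fst ` set xs in
      F\<lparr>En := E, PA := (\<lambda>V. if V \<in> E then PA F V else {}),
         Fn := (\<lambda>V. if V \<in> E then Fn F V else undefined)\<rparr>)"

text \<open>The intervened assignment s^F_{X=x}, the unique assignment satisfying the
  defining recursive equations (unique by acyclicity).\<close>

definition assign_int :: "'v set \<Rightarrow> ('v, 'a) sys \<Rightarrow> ('v \<times> 'a) list \<Rightarrow> ('v \<Rightarrow> 'a) \<Rightarrow> ('v \<Rightarrow> 'a)" where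
  "assign_int Dom F xs s =
     (THE t. (\<forall>(X, x)\<in>set xs. t X = x) \<and>
             (\<forall>V\<in>Dom - En F - fst ` set xs. t V = s V) \<and>
             (\<forall>V\<in>En F - fst ` set xs. t V = Fn F V (restrict t (PA F V))) \<and>
             (\<forall>V. V \<notin> Dom \<longrightarrow> t V = undefined))"

datatype ('v, 'a) fml =
    Eq 'v 'a
  | Dep 'v
  | Neg "('v, 'a) fml"
  | And "('v, 'a) fml" "('v, 'a) fml"
  | Or "('v, 'a) fml" "('v, 'a) fml"
  | Cf "('v \<times> 'a) list" "('v, 'a) fml"

definition causal_team :: "'v set \<Rightarrow> ('v \<Rightarrow> 'a set) \<Rightarrow> ('v \<Rightarrow> 'a) set \<Rightarrow> ('v, 'a) sys \<Rightarrow> bool" where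
  "causal_team Dom Ran S F \<longleftrightarrow> wf_sys Dom Ran F \<and> S \<subseteq> PiE Dom Ran \<and> (\<forall>s\<in>S. compatible F s)"

fun sat_c :: "'v set \<Rightarrow> ('v \<Rightarrow> 'a) set \<Rightarrow> ('v, 'a) sys \<Rightarrow> ('v, 'a) fml \<Rightarrow> bool" where
  "sat_c Dom S F (Eq X x) \<longleftrightarrow> (\<forall>s\<in>S. s X = x)"
| "sat_c Dom S F (Dep V) \<longleftrightarrow> (\<forall>s\<in>S. \<forall>s'\<in>S. s V = s' V)"
| "sat_c Dom S F (Neg a) \<longleftrightarrow> (\<forall>s\<in>S. \<not> sat_c Dom {s} F a)"
| "sat_c Dom S F (And a b) \<longleftrightarrow> sat_c Dom S F a \<and> sat_c Dom S F b"
| "sat_c Dom S F (Or a b) \<longleftrightarrow>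
     (\<exists>S1 S2. S1 \<subseteq> S \<and> S2 \<subseteq> S \<and> S1 \<union> S2 = S \<and> sat_c Dom S1 F a \<and> sat_c Dom S2 F b)"
| "sat_c Dom S F (Cf xs a) \<longleftrightarrow>
     (\<not> consistent xs \<or> sat_c Dom (assign_int Dom F xs ` S) (sys_int F xs) a)"

definition gen_team :: "'v set \<Rightarrow> ('v \<Rightarrow> 'a set) \<Rightarrow> (('v \<Rightarrow> 'a) \<times> ('v, 'a) sys) set \<Rightarrow> bool" where
  "gen_team Dom Ran T \<longleftrightarrow>
     (\<forall>(s, F)\<in>T. wf_sys Dom Ran F \<and> s \<in> PiE Dom Ran \<and> compatible F s)"

fun sat_g :: "'v set \<Rightarrow> (('v \<Rightarrow> 'a) \<times> ('v, 'a) sys) set \<Rightarrow> ('v, 'a) fml \<Rightarrow> bool" where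
  "sat_g Dom T (Eq X x) \<longleftrightarrow> (\<forall>p\<in>T. fst p X = x)"
| "sat_g Dom T (Dep V) \<longleftrightarrow> (\<forall>p\<in>T. \<forall>q\<in>T. fst p V = fst q V)"
| "sat_g Dom T (Neg a) \<longleftrightarrow> (\<forall>p\<in>T. \<not> sat_g Dom {p} a)"
| "sat_g Dom T (And a b) \<longleftrightarrow> sat_g Dom T a \<and> sat_g Dom T b"
| "sat_g Dom T (Or a b) \<longleftrightarrow> (\<exists>T1 T2. T = T1 \<union> T2 \<and> sat_g Dom T1 a \<and> sat_g Dom T2 b)"
| "sat_g Dom T (Cf xs a) \<longleftrightarrow>
     (\<not> consistent xs \<or>
      sat_g Dom ((\<lambda>(s, F). (assign_int Dom F xs s, sys_int F xs)) ` T) a)"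

definition list_of :: "'b set \<Rightarrow> 'b list" where
  "list_of A = (SOME xs. set xs = A \<and> distinct xs)"

fun conjL :: "('v, 'a) fml list \<Rightarrow> ('v, 'a) fml" where
  "conjL [] = undefined"
| "conjL [a] = a"
| "conjL (a # b # bs) = And a (conjL (b # bs))"

text \<open>Conjunction of a finite nonempty set of formulas (order is irrelevant).\<close>
definition conj_set :: "('v, 'a) fml set \<Rightarrow> ('v, 'a) fml" where
  "conj_set A = conjL (list_of A)"

definition fbot :: "'v set \<Rightarrow> ('v \<Rightarrow> 'a set) \<Rightarrow> ('v, 'a) fml" where
  "fbot Dom Ran =
     (let X = (SOME X. X \<in> Dom); x = (SOME x. x \<in> Ran X) in And (Eq X x) (Neg (Eq X x)))"

text \<open>The antecedent W_V = w, where W_V lists Dom - {V}.\<close>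
definition ante :: "'v set \<Rightarrow> 'v \<Rightarrow> ('v \<Rightarrow> 'a) \<Rightarrow> ('v \<times> 'a) list" where
  "ante Dom V w = map (\<lambda>W. (W, w W)) (list_of (Dom - {V}))"

definition chi :: "'v set \<Rightarrow> ('v \<Rightarrow> 'a set) \<Rightarrow> ('v, 'a) fml" where
  "chi Dom Ran =
     And (conj_set {conj_set {Cf (ante Dom V w) (Dep V) | w. w \<in> PiE (Dom - {V}) Ran} | V. V \<in> Dom})
         (conj_set (Dep ` Dom))"

fun chik :: "'v set \<Rightarrow> ('v \<Rightarrow> 'a set) \<Rightarrow> nat \<Rightarrow> ('v, 'a) fml" where
  "chik Dom Ran 0 = fbot Dom Ran"
| "chik Dom Ran (Suc 0) = chi Dom Ran"
| "chik Dom Ran (Suc (Suc k)) = Or (chi Dom Ran) (chik Dom Ran (Suc k))"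

definition Cn :: "('v \<Rightarrow> 'a set) \<Rightarrow> ('v, 'a) sys \<Rightarrow> 'v set" where
  "Cn Ran F = {V \<in> En F. \<exists>c. \<forall>x\<in>PiE (PA F V) Ran. Fn F V x = c}"

definition merge :: "'v set \<Rightarrow> ('v \<Rightarrow> 'a) \<Rightarrow> ('v \<Rightarrow> 'a) \<Rightarrow> ('v \<Rightarrow> 'a)" where
  "merge A x y = (\<lambda>W. if W \<in> A then x W else y W)"

definition fn_sim :: "('v \<Rightarrow> 'a set) \<Rightarrow> ('v, 'a) sys \<Rightarrow> ('v, 'a) sys \<Rightarrow> 'v \<Rightarrow> bool" where
  "fn_sim Ran F G V \<longleftrightarrow>
     (\<forall>x\<in>PiE (PA F V \<inter> PA G V) Ran. \<forall>y\<in>PiE (PA F V - PA G V) Ran.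
        \<forall>z\<in>PiE (PA G V - PA F V) Ran.
        Fn F V (merge (PA F V \<inter> PA G V) x y) = Fn G V (merge (PA F V \<inter> PA G V) x z))"

definition sys_sim :: "('v \<Rightarrow> 'a set) \<Rightarrow> ('v, 'a) sys \<Rightarrow> ('v, 'a) sys \<Rightarrow> bool" where
  "sys_sim Ran F G \<longleftrightarrow> En F - Cn Ran F = En G - Cn Ran G \<and>
     (\<forall>V\<in>En F - Cn Ran F. fn_sim Ran F G V)"

definition approx_rel :: "('v \<Rightarrow> 'a set) \<Rightarrow> (('v \<Rightarrow> 'a) \<times> ('v, 'a) sys) set
     \<Rightarrow> ((('v \<Rightarrow> 'a) \<times> ('v, 'a) sys) \<times> (('v \<Rightarrow> 'a) \<times> ('v, 'a) sys)) set" where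
  "approx_rel Ran T = {(p, q). p \<in> T \<and> q \<in> T \<and> fst p = fst q \<and> sys_sim Ran (snd p) (snd q)}"

end

theory Submission
  imports Defs
begin

(* Call the profile of a pair (s, F) the assignment s together with the response of every
   variable V to every intervention W_V = w on all the other variables.  If F_V is constant or V
   is exogenous, this response is just s(V); otherwise it varies with w, and it determines F_V up
   to \<sim>.  Hence (s, F) \<approx> (t, G) iff the two pairs have the same profile.  The conjuncts of \<chi>
   say precisely that every such response, and every value of the assignments, is constant on
   the team; so T \<models> \<chi> iff T has at most one profile, and T \<models> \<chi>\<^sub>k iff T splits into
   k teams with at most one profile each, i.e. iff T has at most k profiles.  A causal team
   (S, F) satisfies the same formulas as the generalized team S \<times> {F}, in which distinct
   assignments have distinct profiles. *)

lemma set_list_of: "finite A \<Longrightarrow> set (list_of A) = A"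
  unfolding list_of_def by (metis (mono_tags, lifting) finite_distinct_list someI_ex)

lemma sat_g_conjL: "xs \<noteq> [] \<Longrightarrow> sat_g Dom T (conjL xs) \<longleftrightarrow> (\<forall>a\<in>set xs. sat_g Dom T a)"
  by (induction xs rule: conjL.induct) auto

lemma sat_g_conj_set:
  "finite A \<Longrightarrow> A \<noteq> {} \<Longrightarrow> sat_g Dom T (conj_set A) \<longleftrightarrow> (\<forall>a\<in>A. sat_g Dom T a)"
  unfolding conj_set_def by (metis sat_g_conjL set_empty set_list_of)

lemma sat_g_fbot: "sat_g Dom T (fbot Dom Ran) \<longleftrightarrow> T = {}"
  unfolding fbot_def Let_def by auto

lemma signature_finite_PiE: "signature Dom Ran \<Longrightarrow> A \<subseteq> Dom \<Longrightarrow> finite (PiE A Ran)"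
  unfolding signature_def by (intro finite_PiE) (auto intro: finite_subset)

lemma signature_PiE_nonempty: "signature Dom Ran \<Longrightarrow> A \<subseteq> Dom \<Longrightarrow> PiE A Ran \<noteq> {}"
  unfolding signature_def by (auto simp: PiE_eq_empty_iff)

lemma sat_g_chi_iff:
  assumes sig: "signature Dom Ran"
  shows "sat_g Dom T (chi Dom Ran) \<longleftrightarrow>
     (\<forall>V\<in>Dom. \<forall>w\<in>PiE (Dom - {V}) Ran. sat_g Dom T (Cf (ante Dom V w) (Dep V))) \<and>
     (\<forall>V\<in>Dom. \<forall>p\<in>T. \<forall>q\<in>T. fst p V = fst q V)"
proof -
  have Dom: "finite Dom" "Dom \<noteq> {}"
    using sig unfolding signature_def by auto
  have W: "finite (PiE (Dom - {V}) Ran)" "PiE (Dom - {V}) Ran \<noteq> {}" for V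
    using signature_finite_PiE[OF sig] signature_PiE_nonempty[OF sig] by auto
  show ?thesis
    unfolding chi_def using Dom W
    by (simp add: Setcompr_eq_image sat_g_conj_set)
qed

section \<open>Interventions on all variables but one\<close>

definition response :: "('v, 'a) sys \<Rightarrow> ('v \<Rightarrow> 'a) \<Rightarrow> 'v \<Rightarrow> ('v \<Rightarrow> 'a) \<Rightarrow> 'a" where
  "response F s V w = (if V \<in> En F then Fn F V (restrict w (PA F V)) else s V)"

lemma set_ante: "finite Dom \<Longrightarrow> set (ante Dom V w) = (\<lambda>W. (W, w W)) ` (Dom - {V})"
  unfolding ante_def by (simp add: set_list_of)

lemma assign_int_ante:
  assumes wf: "wf_sys Dom Ran F" and fin: "finite Dom" and V: "V \<in> Dom"
  shows "assign_int Dom F (ante Dom V w) s V = response F s V w"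
proof -
  define t0 where
    "t0 = (\<lambda>X. if X \<in> Dom - {V} then w X else if X = V then response F s V w else undefined)"
  have PA: "V \<in> En F \<Longrightarrow> PA F V \<subseteq> Dom - {V}" and En: "En F \<subseteq> Dom"
    using wf unfolding wf_sys_def by blast+
  have restrict_PA: "V \<in> En F \<Longrightarrow> restrict t (PA F V) = restrict w (PA F V)"
    if "\<forall>X\<in>Dom - {V}. t X = w X" for t
    using PA that by (auto intro!: restrict_ext)
  have ante: "set (ante Dom V w) = (\<lambda>W. (W, w W)) ` (Dom - {V})"
    "fst ` set (ante Dom V w) = Dom - {V}"
    by (simp_all add: set_ante[OF fin] image_image)
  \<comment> \<open>All variables but V are fixed by the intervention, so only the equation of V remains.\<close>
  have "assign_int Dom F (ante Dom V w) s = t0"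
    unfolding assign_int_def ante(2) unfolding ante(1)
  proof (rule the_equality)
    show "(\<forall>(X, x)\<in>(\<lambda>W. (W, w W)) ` (Dom - {V}). t0 X = x) \<and>
      (\<forall>Y\<in>Dom - En F - (Dom - {V}). t0 Y = s Y) \<and>
      (\<forall>Y\<in>En F - (Dom - {V}). t0 Y = Fn F Y (restrict t0 (PA F Y))) \<and>
      (\<forall>Y. Y \<notin> Dom \<longrightarrow> t0 Y = undefined)"
    proof (intro conjI)
      have "\<forall>X\<in>Dom - {V}. t0 X = w X"
        by (simp add: t0_def)
      from restrict_PA[OF this]
      show "\<forall>Y\<in>En F - (Dom - {V}). t0 Y = Fn F Y (restrict t0 (PA F Y))"
        using En by (auto simp: t0_def response_def)
    qed (auto simp: t0_def response_def V)
  next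
    fix t
    assume P: "(\<forall>(X, x)\<in>(\<lambda>W. (W, w W)) ` (Dom - {V}). t X = x) \<and>
      (\<forall>Y\<in>Dom - En F - (Dom - {V}). t Y = s Y) \<and>
      (\<forall>Y\<in>En F - (Dom - {V}). t Y = Fn F Y (restrict t (PA F Y))) \<and>
      (\<forall>Y. Y \<notin> Dom \<longrightarrow> t Y = undefined)"
    have tw: "\<forall>X\<in>Dom - {V}. t X = w X"
      using P[THEN conjunct1] by auto
    have "V \<in> En F \<Longrightarrow> t V = Fn F V (restrict t (PA F V))" "V \<notin> En F \<Longrightarrow> t V = s V"
      using P V by blast+
    then have "t V = response F s V w"
      using restrict_PA[OF tw] by (simp add: response_def)
    moreover have "\<forall>Y. Y \<notin> Dom \<longrightarrow> t Y = undefined"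
      using P by blast
    ultimately show "t = t0"
      using tw unfolding t0_def by fastforce
  qed
  then show ?thesis by (simp add: t0_def)
qed

lemma consistent_ante: "finite Dom \<Longrightarrow> consistent (ante Dom V w)"
  unfolding consistent_def by (auto simp: set_ante)

lemma sat_g_Cf_ante_Dep:
  assumes fin: "finite Dom" and T: "gen_team Dom Ran T" and V: "V \<in> Dom"
  shows "sat_g Dom T (Cf (ante Dom V w) (Dep V)) \<longleftrightarrow>
    (\<forall>p\<in>T. \<forall>q\<in>T. response (snd p) (fst p) V w = response (snd q) (fst q) V w)"
proof -
  have "fst ((\<lambda>(s, F). (assign_int Dom F (ante Dom V w) s, sys_int F (ante Dom V w))) p) V
      = response (snd p) (fst p) V w" if "p \<in> T" for p
  proof (cases p)
    case (Pair s F)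
    with T that have "wf_sys Dom Ran F"
      unfolding gen_team_def by auto
    from assign_int_ante[OF this fin V] show ?thesis
      using Pair by simp
  qed
  then show ?thesis using consistent_ante[OF fin] by auto
qed

lemma response_in_Ran:
  assumes "wf_sys Dom Ran F" "s \<in> PiE Dom Ran" "V \<in> Dom" "w \<in> PiE (Dom - {V}) Ran"
  shows "response F s V w \<in> Ran V"
  using assms unfolding wf_sys_def response_def by (fastforce simp: PiE_iff)

lemma restrict_PiE_subset: "w \<in> PiE B Ran \<Longrightarrow> A \<subseteq> B \<Longrightarrow> restrict w A \<in> PiE A Ran"
  by (auto simp: restrict_PiE_iff PiE_iff)

lemma PiE_extend:
  assumes "x \<in> PiE A Ran" "A \<subseteq> B" "\<forall>X\<in>B. Ran X \<noteq> {}"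
  obtains w where "w \<in> PiE B Ran" "restrict w A = x"
proof
  let ?w = "\<lambda>X\<in>B. if X \<in> A then x X else SOME y. y \<in> Ran X"
  show "?w \<in> PiE B Ran"
    using assms by (auto simp: PiE_iff some_in_eq)
  show "restrict ?w A = x"
    using assms by (auto simp: PiE_iff extensional_def fun_eq_iff)
qed

lemma response_of_exogenous_or_constant:
  assumes F: "wf_sys Dom Ran F" and s: "s \<in> PiE Dom Ran" "compatible F s"
    and V: "V \<notin> En F - Cn Ran F" and w: "w \<in> PiE (Dom - {V}) Ran"
  shows "response F s V w = s V"
proof (cases "V \<in> En F")
  case True
  with V obtain c where c: "\<forall>x\<in>PiE (PA F V) Ran. Fn F V x = c"
    unfolding Cn_def by blast
  have PA: "PA F V \<subseteq> Dom - {V}"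
    using F True unfolding wf_sys_def by blast
  have "restrict s (PA F V) \<in> PiE (PA F V) Ran"
    using restrict_PiE_subset[OF s(1)] PA by blast
  with c have "s V = c"
    using s(2) True unfolding compatible_def by metis
  moreover have "response F s V w = c"
    using True c restrict_PiE_subset[OF w PA] by (simp add: response_def)
  ultimately show ?thesis by simp
qed (simp add: response_def)

lemma nonconstant_iff_response_varies:
  assumes sig: "signature Dom Ran" and F: "wf_sys Dom Ran F"
    and s: "s \<in> PiE Dom Ran" "compatible F s"
  shows "V \<in> En F - Cn Ran F \<longleftrightarrow>
    (\<exists>w1\<in>PiE (Dom - {V}) Ran. \<exists>w2\<in>PiE (Dom - {V}) Ran. response F s V w1 \<noteq> response F s V w2)"
proof
  assume V: "V \<in> En F - Cn Ran F"
  have PA: "PA F V \<subseteq> Dom - {V}"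
    using F V unfolding wf_sys_def by blast
  have Ran: "\<forall>X\<in>Dom - {V}. Ran X \<noteq> {}"
    using sig unfolding signature_def by blast
  then obtain x1 where x1: "x1 \<in> PiE (PA F V) Ran"
    using PA by (force simp: PiE_eq_empty_iff)
  with V obtain x2 where x2: "x2 \<in> PiE (PA F V) Ran" "Fn F V x2 \<noteq> Fn F V x1"
    unfolding Cn_def by blast
  obtain w1 where "w1 \<in> PiE (Dom - {V}) Ran" "restrict w1 (PA F V) = x1"
    using PiE_extend[OF x1 PA Ran] .
  moreover obtain w2 where "w2 \<in> PiE (Dom - {V}) Ran" "restrict w2 (PA F V) = x2"
    using PiE_extend[OF x2(1) PA Ran] .
  ultimately show "\<exists>w1\<in>PiE (Dom - {V}) Ran. \<exists>w2\<in>PiE (Dom - {V}) Ran.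
      response F s V w1 \<noteq> response F s V w2"
    using V x2(2) by (auto simp: response_def)
next
  assume "\<exists>w1\<in>PiE (Dom - {V}) Ran. \<exists>w2\<in>PiE (Dom - {V}) Ran.
    response F s V w1 \<noteq> response F s V w2"
  then show "V \<in> En F - Cn Ran F"
    using response_of_exogenous_or_constant[OF F s] by metis
qed

lemma fn_sim_iff_same_response:
  assumes sig: "signature Dom Ran" and F: "wf_sys Dom Ran F" "V \<in> En F"
    and G: "wf_sys Dom Ran G" "V \<in> En G"
  shows "fn_sim Ran F G V \<longleftrightarrow> (\<forall>w\<in>PiE (Dom - {V}) Ran. response F s V w = response G s V w)"
proof -
  let ?A = "PA F V \<inter> PA G V"
  have PF: "PA F V \<subseteq> Dom - {V}" and PG: "PA G V \<subseteq> Dom - {V}"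
    using F G unfolding wf_sys_def by blast+
  show ?thesis
  proof
    assume sim: "fn_sim Ran F G V"
    show "\<forall>w\<in>PiE (Dom - {V}) Ran. response F s V w = response G s V w"
    proof
      fix w assume w: "w \<in> PiE (Dom - {V}) Ran"
      have "restrict w B \<in> PiE B Ran" if "B \<subseteq> PA F V \<union> PA G V" for B
        using restrict_PiE_subset[OF w] that PF PG by (meson le_sup_iff order_trans)
      then have "restrict w ?A \<in> PiE ?A Ran" "restrict w (PA F V - PA G V) \<in> PiE (PA F V - PA G V) Ran"
        "restrict w (PA G V - PA F V) \<in> PiE (PA G V - PA F V) Ran"
        by (meson Diff_subset Int_lower1 le_supI1 le_supI2)+
      with sim have "Fn F V (merge ?A (restrict w ?A) (restrict w (PA F V - PA G V)))
          = Fn G V (merge ?A (restrict w ?A) (restrict w (PA G V - PA F V)))"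
        unfolding fn_sim_def by blast
      moreover have "merge ?A (restrict w ?A) (restrict w (PA F V - PA G V)) = restrict w (PA F V)"
        and "merge ?A (restrict w ?A) (restrict w (PA G V - PA F V)) = restrict w (PA G V)"
        by (auto simp: merge_def fun_eq_iff)
      ultimately show "response F s V w = response G s V w"
        using F G by (simp add: response_def)
    qed
  next
    assume same: "\<forall>w\<in>PiE (Dom - {V}) Ran. response F s V w = response G s V w"
    show "fn_sim Ran F G V"
      unfolding fn_sim_def
    proof (intro ballI)
      fix x y z
      assume x: "x \<in> PiE ?A Ran" and y: "y \<in> PiE (PA F V - PA G V) Ran"
        and z: "z \<in> PiE (PA G V - PA F V) Ran"
      let ?u = "merge ?A x (merge (PA F V - PA G V) y z)"
      have u: "?u \<in> PiE (PA F V \<union> PA G V) Ran"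
        using x y z by (simp add: PiE_iff merge_def extensional_def) blast
      have PFG: "PA F V \<union> PA G V \<subseteq> Dom - {V}"
        using PF PG by blast
      have "\<forall>X\<in>Dom - {V}. Ran X \<noteq> {}"
        using sig unfolding signature_def by blast
      then obtain w where w: "w \<in> PiE (Dom - {V}) Ran" and w_u: "restrict w (PA F V \<union> PA G V) = ?u"
        using PiE_extend[OF u PFG] by blast
      have "restrict w (PA F V) = restrict ?u (PA F V)"
        unfolding w_u[symmetric] by (simp add: Int_absorb2)
      also have "\<dots> = merge ?A x y"
        using y by (simp add: fun_eq_iff merge_def PiE_iff extensional_def)
      finally have wF: "restrict w (PA F V) = merge ?A x y" .
      have "restrict w (PA G V) = restrict ?u (PA G V)"
        unfolding w_u[symmetric] by (simp add: Int_absorb2)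
      also have "\<dots> = merge ?A x z"
        using z by (simp add: fun_eq_iff merge_def PiE_iff extensional_def)
      finally have wG: "restrict w (PA G V) = merge ?A x z" .
      have "response F s V w = response G s V w"
        using same w by blast
      then show "Fn F V (merge ?A x y) = Fn G V (merge ?A x z)"
        using F G wF wG by (simp add: response_def)
    qed
  qed
qed

lemma sys_sim_iff_same_responses:
  assumes sig: "signature Dom Ran" and F: "wf_sys Dom Ran F" "compatible F s"
    and G: "wf_sys Dom Ran G" "compatible G s" and s: "s \<in> PiE Dom Ran"
  shows "sys_sim Ran F G \<longleftrightarrow>
    (\<forall>V\<in>Dom. \<forall>w\<in>PiE (Dom - {V}) Ran. response F s V w = response G s V w)"
proof
  assume sim: "sys_sim Ran F G"
  show "\<forall>V\<in>Dom. \<forall>w\<in>PiE (Dom - {V}) Ran. response F s V w = response G s V w"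
  proof (intro ballI)
    fix V w assume w: "w \<in> PiE (Dom - {V}) Ran"
    show "response F s V w = response G s V w"
    proof (cases "V \<in> En F - Cn Ran F")
      case True
      with sim have "V \<in> En G" "fn_sim Ran F G V"
        unfolding sys_sim_def by auto
      with True show ?thesis
        using fn_sim_iff_same_response[OF sig F(1) _ G(1), of V s] w by blast
    next
      case False
      with sim have "V \<notin> En G - Cn Ran G"
        unfolding sys_sim_def by auto
      with False show ?thesis
        using response_of_exogenous_or_constant[OF F(1) s F(2) _ w]
          response_of_exogenous_or_constant[OF G(1) s G(2) _ w] by simp
    qed
  qed
next
  assume same: "\<forall>V\<in>Dom. \<forall>w\<in>PiE (Dom - {V}) Ran. response F s V w = response G s V w"
  have En: "En F \<subseteq> Dom" "En G \<subseteq> Dom"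
    using F(1) G(1) unfolding wf_sys_def by auto
  have nonconstant: "V \<in> En F - Cn Ran F \<longleftrightarrow> V \<in> En G - Cn Ran G" for V
  proof (cases "V \<in> Dom")
    case True
    with same have "\<forall>w\<in>PiE (Dom - {V}) Ran. response F s V w = response G s V w"
      by blast
    then show ?thesis
      unfolding nonconstant_iff_response_varies[OF sig F(1) s F(2)]
        nonconstant_iff_response_varies[OF sig G(1) s G(2)] by auto
  qed (use En in auto)
  moreover have "fn_sim Ran F G V" if "V \<in> En F - Cn Ran F" for V
    using that nonconstant[of V] En same fn_sim_iff_same_response[OF sig F(1) _ G(1), of V s]
    by blast
  ultimately show "sys_sim Ran F G"
    unfolding sys_sim_def by blast
qed

section \<open>Profiles and the relation \<approx>\<close>

definition profile :: "'v set \<Rightarrow> ('v \<Rightarrow> 'a set) \<Rightarrow> ('v \<Rightarrow> 'a) \<times> ('v, 'a) sys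
    \<Rightarrow> ('v \<Rightarrow> 'a) \<times> ('v \<Rightarrow> ('v \<Rightarrow> 'a) \<Rightarrow> 'a)" where
  "profile Dom Ran p = (fst p, \<lambda>V\<in>Dom. \<lambda>w\<in>PiE (Dom - {V}) Ran. response (snd p) (fst p) V w)"

lemma profile_eq_iff:
  "profile Dom Ran p = profile Dom Ran q \<longleftrightarrow> fst p = fst q \<and>
     (\<forall>V\<in>Dom. \<forall>w\<in>PiE (Dom - {V}) Ran. response (snd p) (fst p) V w = response (snd q) (fst q) V w)"
  unfolding profile_def by (auto simp: fun_eq_iff)

lemma gen_team_subset: "gen_team Dom Ran T \<Longrightarrow> T' \<subseteq> T \<Longrightarrow> gen_team Dom Ran T'"
  unfolding gen_team_def by blast

lemma gen_team_memD:
  "gen_team Dom Ran T \<Longrightarrow> p \<in> T \<Longrightarrow>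
    wf_sys Dom Ran (snd p) \<and> fst p \<in> PiE Dom Ran \<and> compatible (snd p) (fst p)"
  unfolding gen_team_def by (cases p) auto

lemma approx_rel_eq_profile_kernel:
  assumes sig: "signature Dom Ran" and T: "gen_team Dom Ran T"
  shows "approx_rel Ran T = {(p, q). p \<in> T \<and> q \<in> T \<and> profile Dom Ran p = profile Dom Ran q}"
proof -
  have "sys_sim Ran (snd p) (snd q) \<longleftrightarrow>
      (\<forall>V\<in>Dom. \<forall>w\<in>PiE (Dom - {V}) Ran. response (snd p) (fst p) V w = response (snd q) (fst q) V w)"
    if "p \<in> T" "q \<in> T" "fst p = fst q" for p q
    using sys_sim_iff_same_responses[OF sig, of "snd p" "fst p" "snd q"]
      gen_team_memD[OF T that(1)] gen_team_memD[OF T that(2)] that(3) by simp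
  then show ?thesis
    unfolding approx_rel_def profile_eq_iff by auto
qed

lemma card_quotient_kernel: "card (T // {(p, q). p \<in> T \<and> q \<in> T \<and> f p = f q}) = card (f ` T)"
proof -
  have "T // {(p, q). p \<in> T \<and> q \<in> T \<and> f p = f q} = (\<lambda>c. {q \<in> T. c = f q}) ` f ` T"
    unfolding quotient_def by auto
  moreover have "inj_on (\<lambda>c. {q \<in> T. c = f q}) (f ` T)"
    by (rule inj_onI) auto
  ultimately show ?thesis
    by (simp add: card_image)
qed

lemma finite_profile_image:
  assumes sig: "signature Dom Ran" and T: "gen_team Dom Ran T"
  shows "finite (profile Dom Ran ` T)"
proof (rule finite_subset)
  show "profile Dom Ran ` T \<subseteq> PiE Dom Ran \<times> PiE Dom (\<lambda>V. PiE (PiE (Dom - {V}) Ran) (\<lambda>_. Ran V))"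
  proof
    fix x assume "x \<in> profile Dom Ran ` T"
    then obtain p where p: "p \<in> T" "x = profile Dom Ran p"
      by blast
    have wf: "wf_sys Dom Ran (snd p)" and s: "fst p \<in> PiE Dom Ran"
      using gen_team_memD[OF T p(1)] by blast+
    show "x \<in> PiE Dom Ran \<times> PiE Dom (\<lambda>V. PiE (PiE (Dom - {V}) Ran) (\<lambda>_. Ran V))"
      using s response_in_Ran[OF wf s] unfolding p(2) profile_def by auto
  qed
  have Dom: "finite Dom" and Ran: "\<And>V. V \<in> Dom \<Longrightarrow> finite (Ran V)"
    using sig unfolding signature_def by blast+
  have "finite (PiE (PiE (Dom - {V}) Ran) (\<lambda>_. Ran V))" if "V \<in> Dom" for V
    using signature_finite_PiE[OF sig, of "Dom - {V}"] Ran[OF that] by (rule finite_PiE) auto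
  then have "finite (PiE Dom (\<lambda>V. PiE (PiE (Dom - {V}) Ran) (\<lambda>_. Ran V)))"
    by (rule finite_PiE[OF Dom])
  then show "finite (PiE Dom Ran \<times> PiE Dom (\<lambda>V. PiE (PiE (Dom - {V}) Ran) (\<lambda>_. Ran V)))"
    using signature_finite_PiE[OF sig order_refl] by (rule finite_cartesian_product[rotated])
qed

lemma sat_g_chi_iff_card_profiles:
  assumes sig: "signature Dom Ran" and T: "gen_team Dom Ran T"
  shows "sat_g Dom T (chi Dom Ran) \<longleftrightarrow> card (profile Dom Ran ` T) \<le> 1"
proof -
  have fin: "finite Dom"
    using sig unfolding signature_def by blast
  have "sat_g Dom T (chi Dom Ran) \<longleftrightarrow>
      (\<forall>V\<in>Dom. \<forall>w\<in>PiE (Dom - {V}) Ran. \<forall>p\<in>T. \<forall>q\<in>T.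
        response (snd p) (fst p) V w = response (snd q) (fst q) V w) \<and>
      (\<forall>V\<in>Dom. \<forall>p\<in>T. \<forall>q\<in>T. fst p V = fst q V)"
    unfolding sat_g_chi_iff[OF sig]
    by (rule conj_cong, rule ball_cong[OF refl], rule ball_cong[OF refl],
        rule sat_g_Cf_ante_Dep[OF fin T]) simp_all
  also have "\<dots> \<longleftrightarrow> (\<forall>p\<in>T. \<forall>q\<in>T. profile Dom Ran p = profile Dom Ran q)"
  proof (intro iffI ballI)
    fix p q assume p: "p \<in> T" and q: "q \<in> T"
      and same: "(\<forall>V\<in>Dom. \<forall>w\<in>PiE (Dom - {V}) Ran. \<forall>p\<in>T. \<forall>q\<in>T.
        response (snd p) (fst p) V w = response (snd q) (fst q) V w) \<and>
      (\<forall>V\<in>Dom. \<forall>p\<in>T. \<forall>q\<in>T. fst p V = fst q V)"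
    have "fst p V = fst q V" if "V \<in> Dom" for V
      using same that p q by blast
    then have "fst p = fst q"
      using gen_team_memD[OF T p] gen_team_memD[OF T q] by (blast intro: PiE_ext)
    moreover have "\<forall>V\<in>Dom. \<forall>w\<in>PiE (Dom - {V}) Ran.
        response (snd p) (fst p) V w = response (snd q) (fst q) V w"
      using same p q by blast
    ultimately show "profile Dom Ran p = profile Dom Ran q"
      unfolding profile_eq_iff by blast
  next
    assume same: "\<forall>p\<in>T. \<forall>q\<in>T. profile Dom Ran p = profile Dom Ran q"
    show "(\<forall>V\<in>Dom. \<forall>w\<in>PiE (Dom - {V}) Ran. \<forall>p\<in>T. \<forall>q\<in>T.
        response (snd p) (fst p) V w = response (snd q) (fst q) V w) \<and>
      (\<forall>V\<in>Dom. \<forall>p\<in>T. \<forall>q\<in>T. fst p V = fst q V)"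
    proof (intro conjI ballI)
      fix V w p q assume "V \<in> Dom" "w \<in> PiE (Dom - {V}) Ran" "p \<in> T" "q \<in> T"
      with same show "response (snd p) (fst p) V w = response (snd q) (fst q) V w"
        unfolding profile_eq_iff by blast
    next
      fix V p q assume "p \<in> T" "q \<in> T"
      with same have "fst p = fst q"
        unfolding profile_eq_iff by blast
      then show "fst p V = fst q V"
        by simp
    qed
  qed
  also have "\<dots> \<longleftrightarrow> card (profile Dom Ran ` T) \<le> 1"
    using card_le_Suc0_iff_eq[OF finite_profile_image[OF sig T]] by simp
  finally show ?thesis .
qed

section \<open>Counting profiles\<close>

lemma card_image_le_Suc_iff_Un:
  assumes fin: "finite (f ` T)"
  shows "card (f ` T) \<le> Suc k \<longleftrightarrow>
    (\<exists>T1 T2. T = T1 \<union> T2 \<and> card (f ` T1) \<le> 1 \<and> card (f ` T2) \<le> k)"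
proof
  assume card: "card (f ` T) \<le> Suc k"
  show "\<exists>T1 T2. T = T1 \<union> T2 \<and> card (f ` T1) \<le> 1 \<and> card (f ` T2) \<le> k"
  proof (cases "T = {}")
    case True
    then show ?thesis by auto
  next
    case False
    then obtain p where p: "p \<in> T" by blast
    let ?T1 = "{q \<in> T. f q = f p}" and ?T2 = "{q \<in> T. f q \<noteq> f p}"
    have "f ` ?T1 = {f p}"
      using p by auto
    then have "card (f ` ?T1) \<le> 1"
      by simp
    moreover have "f ` ?T2 = f ` T - {f p}"
      by auto
    then have "card (f ` ?T2) \<le> k"
      using card fin p by simp
    moreover have "T = ?T1 \<union> ?T2"
      by auto
    ultimately show ?thesis
      by blast
  qed
next
  assume "\<exists>T1 T2. T = T1 \<union> T2 \<and> card (f ` T1) \<le> 1 \<and> card (f ` T2) \<le> k"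
  then obtain T1 T2 where T: "T = T1 \<union> T2" "card (f ` T1) \<le> 1" "card (f ` T2) \<le> k"
    by blast
  have "card (f ` T) \<le> card (f ` T1) + card (f ` T2)"
    unfolding T(1) image_Un by (rule card_Un_le)
  with T(2,3) show "card (f ` T) \<le> Suc k"
    by linarith
qed

lemma sat_g_chik_iff_card_profiles:
  assumes "signature Dom Ran" and "gen_team Dom Ran T"
  shows "sat_g Dom T (chik Dom Ran k) \<longleftrightarrow> card (profile Dom Ran ` T) \<le> k"
  using assms
proof (induction Dom Ran k arbitrary: T rule: chik.induct)
  case (1 Dom Ran)
  then show ?case
    using finite_profile_image[OF 1] by (simp add: sat_g_fbot)
next
  case (2 Dom Ran)
  then show ?case
    by (simp add: sat_g_chi_iff_card_profiles)
next
  case (3 Dom Ran k)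
  have subteam: "gen_team Dom Ran T'" if "T' \<subseteq> T" for T'
    using gen_team_subset[OF "3.prems"(2) that] .
  have "sat_g Dom T (chik Dom Ran (Suc (Suc k))) \<longleftrightarrow>
      (\<exists>T1 T2. T = T1 \<union> T2 \<and> card (profile Dom Ran ` T1) \<le> 1 \<and>
        card (profile Dom Ran ` T2) \<le> Suc k)"
    using sat_g_chi_iff_card_profiles[OF "3.prems"(1) subteam] "3.IH"[OF "3.prems"(1) subteam]
    by (simp del: chik.simps(2)) (metis Un_upper1 Un_upper2)
  also have "\<dots> \<longleftrightarrow> card (profile Dom Ran ` T) \<le> Suc (Suc k)"
    using card_image_le_Suc_iff_Un[OF finite_profile_image[OF "3.prems"]] by simp
  finally show ?case .
qed

lemma sat_g_chik_iff_card_quotient: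
  assumes sig: "signature Dom Ran" and T: "gen_team Dom Ran T"
  shows "sat_g Dom T (chik Dom Ran k) \<longleftrightarrow> card (T // approx_rel Ran T) \<le> k"
  unfolding approx_rel_eq_profile_kernel[OF sig T] card_quotient_kernel
  using sat_g_chik_iff_card_profiles[OF sig T] .

section \<open>Causal teams\<close>

lemma sat_c_iff_sat_g_Times: "sat_c Dom S F \<phi> \<longleftrightarrow> sat_g Dom (S \<times> {F}) \<phi>"
proof (induction \<phi> arbitrary: S F)
  case (Or \<phi> \<psi>)
  show ?case
  proof
    assume "sat_c Dom S F (Or \<phi> \<psi>)"
    then obtain S1 S2 where "S = S1 \<union> S2" "sat_c Dom S1 F \<phi>" "sat_c Dom S2 F \<psi>"
      by auto
    then have "S \<times> {F} = S1 \<times> {F} \<union> S2 \<times> {F}" "sat_g Dom (S1 \<times> {F}) \<phi>" "sat_g Dom (S2 \<times> {F}) \<psi>"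
      using Or.IH by auto
    then show "sat_g Dom (S \<times> {F}) (Or \<phi> \<psi>)"
      by auto
  next
    assume "sat_g Dom (S \<times> {F}) (Or \<phi> \<psi>)"
    then obtain T1 T2 where T: "S \<times> {F} = T1 \<union> T2" "sat_g Dom T1 \<phi>" "sat_g Dom T2 \<psi>"
      by auto
    then have T1: "T1 = fst ` T1 \<times> {F}" and T2: "T2 = fst ` T2 \<times> {F}"
      by force+
    have "S = fst ` T1 \<union> fst ` T2"
      using arg_cong[OF T(1), of "image fst"] by (simp add: image_Un)
    moreover have "sat_c Dom (fst ` T1) F \<phi>" "sat_c Dom (fst ` T2) F \<psi>"
      using T(2,3) T1 T2 Or.IH by metis+
    ultimately show "sat_c Dom S F (Or \<phi> \<psi>)"
      by auto
  qed
next
  case (Cf xs \<phi>)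
  have "(\<lambda>(s, F). (assign_int Dom F xs s, sys_int F xs)) ` (S \<times> {F})
      = assign_int Dom F xs ` S \<times> {sys_int F xs}"
    by auto
  then show ?case
    using Cf.IH by simp
qed auto

lemma gen_team_Times: "causal_team Dom Ran S F \<Longrightarrow> gen_team Dom Ran (S \<times> {F})"
  unfolding causal_team_def gen_team_def by auto

lemma card_profile_Times: "card (profile Dom Ran ` (S \<times> {F})) = card S"
proof -
  have "profile Dom Ran ` (S \<times> {F}) = (\<lambda>s. profile Dom Ran (s, F)) ` S"
    by auto
  moreover have "inj_on (\<lambda>s. profile Dom Ran (s, F)) S"
    by (rule inj_onI) (simp add: profile_def)
  ultimately show ?thesis
    by (simp add: card_image)
qed

lemma sat_c_chik_iff_card:
  assumes sig: "signature Dom Ran" and ST: "causal_team Dom Ran S F"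
  shows "sat_c Dom S F (chik Dom Ran k) \<longleftrightarrow> card S \<le> k"
  unfolding sat_c_iff_sat_g_Times sat_g_chik_iff_card_profiles[OF sig gen_team_Times[OF ST]]
    card_profile_Times ..

theorem proposition5p4:
  fixes Dom :: "'v set" and Ran :: "'v \<Rightarrow> 'a set" and k :: nat
  assumes "signature Dom Ran"
  shows "(\<forall>T. gen_team Dom Ran T \<longrightarrow>
            (sat_g Dom T (chik Dom Ran k) \<longleftrightarrow> card (T // approx_rel Ran T) \<le> k))
       \<and> (\<forall>S F. causal_team Dom Ran S F \<longrightarrow>
            (sat_c Dom S F (chik Dom Ran k) \<longleftrightarrow> card S \<le> k))"
  using sat_g_chik_iff_card_quotient[OF assms] sat_c_chik_iff_card[OF assms] by blast

end
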